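(* Consider instances with divisible items. There is no (possibly randomized) mechanism $M$ that is individually rational, truthful in expectation and budget feasible in expectation, together with constants $\alpha>1-1/e$ and $\theta_0>0$, such that on every instance with $c_{\max}/B\le\theta_0$ the expected utility of $M$ is at least $\alpha U^\star$.
   Context: A buyer with budget $B>0$ faces a finite set $S$ of sellers; seller $i$ owns one item giving the buyer utility $u_i>0$ and has a private cost $c_i\ge0$; $c_{\max}=\max_i c_i$. Items are divisible: buying a fraction $x_i\in[0,1]$ costs seller $i$ the amount $x_ic_i$ and gives the buyer utility $x_iu_i$. $U^\star=\max\{\sum_iu_i\alpha_i:\alpha\in[0,1]^S,\ \sum_ic_i\alpha_i\le B\}$. A randomized mechanism maps reported costs to random fractions $x_i\in[0,1]$ and random payments $p_i\ge0$; its utility is $\sum_iu_ix_i$. It is truthful in expectation if for every seller $i$ and all reports, $\mathbb E[p_i-c_ix_i]$ is maximized (over $i$'s report, the others' reports fixed) by reporting the true cost $c_i$; individually rational in expectation if $\mathbb E[p_i]\ge c_i\mathbb E[x_i]$ under truthful reports; budget feasible in expectation if $\mathbb E[\sum_ip_i]\le B$. *)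

theory Defs
  imports "HOL-Probability.Probability"
begin

text \<open>A randomized mechanism
maps (S, u, B, reported cost profile) to a probability distribution over outcomes (x, p):
x = fractions bought, p = payments.\<close>

type_synonym outcome = "(nat \<Rightarrow> real) \<times> (nat \<Rightarrow> real)"
type_synonym mechanism = "nat set \<Rightarrow> (nat \<Rightarrow> real) \<Rightarrow> real \<Rightarrow> (nat \<Rightarrow> real) \<Rightarrow> outcome pmf"

definition valid_instance :: "nat set \<Rightarrow> (nat \<Rightarrow> real) \<Rightarrow> real \<Rightarrow> bool" where
  "valid_instance S u B \<longleftrightarrow> finite S \<and> S \<noteq> {} \<and> B > 0 \<and> (\<forall>i\<in>S. u i > 0)"

definition valid_costs :: "nat set \<Rightarrow> (nat \<Rightarrow> real) \<Rightarrow> bool" where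
  "valid_costs S c \<longleftrightarrow> (\<forall>i\<in>S. c i \<ge> 0)"

definition well_formed :: "mechanism \<Rightarrow> bool" where
  "well_formed M \<longleftrightarrow> (\<forall>S u B b. valid_instance S u B \<longrightarrow> valid_costs S b \<longrightarrow>
     (\<forall>\<omega>\<in>set_pmf (M S u B b). \<forall>i\<in>S. 0 \<le> fst \<omega> i \<and> fst \<omega> i \<le> 1 \<and> snd \<omega> i \<ge> 0))"

definition exp_x :: "outcome pmf \<Rightarrow> nat \<Rightarrow> real" where
  "exp_x D i = measure_pmf.expectation D (\<lambda>\<omega>. fst \<omega> i)"

definition exp_p :: "outcome pmf \<Rightarrow> nat \<Rightarrow> real" where
  "exp_p D i = measure_pmf.expectation D (\<lambda>\<omega>. snd \<omega> i)"

text \<open>Budget feasible in expectation (stated via the nonnegative integral, so that it also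
 entails that expected payments are finite).\<close>
definition budget_feasible_exp :: "mechanism \<Rightarrow> bool" where
  "budget_feasible_exp M \<longleftrightarrow> (\<forall>S u B b. valid_instance S u B \<longrightarrow> valid_costs S b \<longrightarrow>
     (\<integral>\<^sup>+ \<omega>. ennreal (\<Sum>i\<in>S. snd \<omega> i) \<partial>measure_pmf (M S u B b)) \<le> ennreal B)"

definition indiv_rational_exp :: "mechanism \<Rightarrow> bool" where
  "indiv_rational_exp M \<longleftrightarrow> (\<forall>S u B c. valid_instance S u B \<longrightarrow> valid_costs S c \<longrightarrow>
     (\<forall>i\<in>S. exp_p (M S u B c) i \<ge> c i * exp_x (M S u B c) i))"

text \<open>Truthful in expectation: for every profile b of reports in which seller i reports
 the true cost b i, no deviation c' of seller i increases its expected profit.\<close>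
definition truthful_exp :: "mechanism \<Rightarrow> bool" where
  "truthful_exp M \<longleftrightarrow> (\<forall>S u B b. valid_instance S u B \<longrightarrow> valid_costs S b \<longrightarrow>
     (\<forall>i\<in>S. \<forall>c'. c' \<ge> 0 \<longrightarrow>
        measure_pmf.expectation (M S u B b) (\<lambda>\<omega>. snd \<omega> i - b i * fst \<omega> i)
        \<ge> measure_pmf.expectation (M S u B (b(i := c'))) (\<lambda>\<omega>. snd \<omega> i - b i * fst \<omega> i)))"

definition opt_frac :: "nat set \<Rightarrow> (nat \<Rightarrow> real) \<Rightarrow> real \<Rightarrow> (nat \<Rightarrow> real) \<Rightarrow> real" where
  "opt_frac S u B c = Sup {\<Sum>i\<in>S. u i * a i | a. (\<forall>i\<in>S. 0 \<le> a i \<and> a i \<le> 1) \<and> (\<Sum>i\<in>S. c i * a i) \<le> B}"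

definition exp_utility :: "mechanism \<Rightarrow> nat set \<Rightarrow> (nat \<Rightarrow> real) \<Rightarrow> real \<Rightarrow> (nat \<Rightarrow> real) \<Rightarrow> real" where
  "exp_utility M S u B c = measure_pmf.expectation (M S u B c) (\<lambda>\<omega>. \<Sum>i\<in>S. u i * fst \<omega> i)"

end

theory Submission
  imports Defs
begin

text \<open>Take \<open>n\<close> sellers of unit utility whose costs are drawn independently from a discretisation
  of the distribution \<open>F(c) = e\<^sup>-\<^sup>1 / (1 - c)\<close> on \<open>[0, 1 - 1/e]\<close>, and budget \<open>n E[c]\<close>. The total
  cost exceeds the budget by only \<open>O(\<surd>n)\<close> in expectation, so the fractional optimum is
  \<open>n - O(\<surd>n)\<close> and an \<open>\<alpha>\<close>-approximate mechanism buys \<open>\<alpha> n - O(\<surd>n)\<close> in expectation.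
  On the other hand the virtual cost of \<open>F\<close> is identically 1, so by Myerson's lemma each seller's
  expected allocation is at most its expected payment plus \<open>Pr[c = 0] = 1/e\<close>. Summing over the
  sellers, the expected utility is at most \<open>n (E[c] + 1/e) = n (1 - 1/e)\<close>, up to the
  discretisation error. Letting \<open>n\<close> and the number of levels grow forces \<open>\<alpha> \<le> 1 - 1/e\<close>.\<close>

lemma fraction_bounds_AE:
  assumes "well_formed M" "valid_instance S u B" "valid_costs S c" "i \<in> S"
  shows "AE \<omega> in measure_pmf (M S u B c). 0 \<le> fst \<omega> i \<and> fst \<omega> i \<le> 1"
  using assms unfolding well_formed_def by (intro AE_pmfI) blast

lemma integrable_fraction:
  assumes "well_formed M" "valid_instance S u B" "valid_costs S c" "i \<in> S"
  shows "integrable (measure_pmf (M S u B c)) (\<lambda>\<omega>. fst \<omega> i)"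
  by (rule measure_pmf.integrable_const_bound[where B=1]) (use fraction_bounds_AE[OF assms] in auto)

lemma exp_x_le_1:
  assumes "well_formed M" "valid_instance S u B" "valid_costs S c" "i \<in> S"
  shows "exp_x (M S u B c) i \<le> 1"
proof -
  have "exp_x (M S u B c) i \<le> measure_pmf.expectation (M S u B c) (\<lambda>_. 1)" unfolding exp_x_def
    by (rule integral_mono_AE) (use fraction_bounds_AE[OF assms] integrable_fraction[OF assms] in auto)
  then show ?thesis by simp
qed

lemma integrable_payment:
  assumes "well_formed M" "budget_feasible_exp M" "valid_instance S u B" "valid_costs S c" "i \<in> S"
  shows "integrable (measure_pmf (M S u B c)) (\<lambda>\<omega>. snd \<omega> i)"
proof -
  let ?D = "measure_pmf (M S u B c)"
  have "AE \<omega> in ?D. ennreal (norm (snd \<omega> i)) \<le> ennreal (\<Sum>j\<in>S. snd \<omega> j)"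
  proof (rule AE_pmfI)
    fix \<omega> assume "\<omega> \<in> set_pmf (M S u B c)"
    then have "\<forall>j\<in>S. snd \<omega> j \<ge> 0" using assms(1,3,4) unfolding well_formed_def by blast
    moreover have "finite S" using assms(3) unfolding valid_instance_def by auto
    ultimately show "ennreal (norm (snd \<omega> i)) \<le> ennreal (\<Sum>j\<in>S. snd \<omega> j)"
      using assms(5) by (auto intro!: ennreal_leI member_le_sum)
  qed
  then have "(\<integral>\<^sup>+ \<omega>. ennreal (norm (snd \<omega> i)) \<partial>?D) \<le> (\<integral>\<^sup>+ \<omega>. ennreal (\<Sum>j\<in>S. snd \<omega> j) \<partial>?D)"
    by (rule nn_integral_mono_AE)
  also have "\<dots> \<le> ennreal B" using assms unfolding budget_feasible_exp_def by blast
  finally show ?thesis by (simp add: integrable_iff_bounded le_less_trans)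
qed

lemma sum_exp_p_le_budget:
  assumes "well_formed M" "budget_feasible_exp M" "valid_instance S u B" "valid_costs S c"
  shows "(\<Sum>i\<in>S. exp_p (M S u B c) i) \<le> B"
proof -
  let ?D = "measure_pmf (M S u B c)"
  have "(\<Sum>i\<in>S. exp_p (M S u B c) i) = measure_pmf.expectation (M S u B c) (\<lambda>\<omega>. \<Sum>i\<in>S. snd \<omega> i)"
    unfolding exp_p_def using integrable_payment[OF assms] by (simp add: Bochner_Integration.integral_sum)
  also have "\<dots> = enn2real (\<integral>\<^sup>+ \<omega>. ennreal (\<Sum>i\<in>S. snd \<omega> i) \<partial>?D)"
  proof (rule integral_eq_nn_integral)
    show "AE \<omega> in ?D. 0 \<le> (\<Sum>i\<in>S. snd \<omega> i)"
      using assms(1,3,4) unfolding well_formed_def by (intro AE_pmfI sum_nonneg) blast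
  qed simp
  also have "\<dots> \<le> B"
    using assms(2-4) unfolding budget_feasible_exp_def valid_instance_def
    by (metis enn2real_ennreal enn2real_mono ennreal_neq_top less_eq_real_def top.not_eq_extremum)
  finally show ?thesis .
qed

lemma exp_profit_eq:
  assumes "well_formed M" "budget_feasible_exp M" "valid_instance S u B" "valid_costs S c" "i \<in> S"
  shows "measure_pmf.expectation (M S u B c) (\<lambda>\<omega>. snd \<omega> i - a * fst \<omega> i)
       = exp_p (M S u B c) i - a * exp_x (M S u B c) i"
  unfolding exp_p_def exp_x_def
  using integrable_fraction[OF assms(1,3,4,5)] integrable_payment[OF assms] by simp

lemma truthful_exp_profit_ge:
  assumes "well_formed M" "budget_feasible_exp M" "truthful_exp M"
    and "valid_instance S u B" "valid_costs S b" "i \<in> S" "t \<ge> 0"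
  shows "exp_p (M S u B b) i - b i * exp_x (M S u B b) i \<ge>
         exp_p (M S u B (b(i:=t))) i - b i * exp_x (M S u B (b(i:=t))) i"
proof -
  have "valid_costs S (b(i:=t))" using assms(5,7) unfolding valid_costs_def by auto
  moreover have "measure_pmf.expectation (M S u B b) (\<lambda>\<omega>. snd \<omega> i - b i * fst \<omega> i)
      \<ge> measure_pmf.expectation (M S u B (b(i := t))) (\<lambda>\<omega>. snd \<omega> i - b i * fst \<omega> i)"
    using assms(3-7) unfolding truthful_exp_def by blast
  ultimately show ?thesis
    using exp_profit_eq[OF assms(1,2,4,5,6)] exp_profit_eq[OF assms(1,2,4) _ assms(6)] by simp
qed

lemma exp_utility_eq_sum:
  assumes "well_formed M" "valid_instance S u B" "valid_costs S c"
  shows "exp_utility M S u B c = (\<Sum>i\<in>S. u i * exp_x (M S u B c) i)"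
  unfolding exp_utility_def exp_x_def
  using Bochner_Integration.integral_sum[of S "measure_pmf (M S u B c)" "\<lambda>i \<omega>. u i * fst \<omega> i"]
    integrable_fraction[OF assms] by simp

lemma myerson_summation:
  fixes D s x p :: "nat \<Rightarrow> real"
  assumes D: "\<And>k. D k \<ge> 0"
    and ic: "\<And>k. k < m \<Longrightarrow> p k - s k * x k \<ge> p (Suc k) - s k * x (Suc k)"
    and "r \<le> m"
  shows "(\<Sum>k\<le>r. D k * (p k - s k * x k)) \<ge>
     (\<Sum>j\<le>r. D j) * (p r - s r * x r) + (\<Sum>k<r. (\<Sum>j\<le>k. D j) * (s (Suc k) - s k) * x (Suc k))"
  using \<open>r \<le> m\<close>
proof (induction r)
  case 0 then show ?case by simp
next
  case (Suc r)
  let ?F = "\<Sum>j\<le>r. D j"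
  have "?F \<ge> 0" using D by (simp add: sum_nonneg)
  moreover have "p r - s r * x r \<ge> (p (Suc r) - s (Suc r) * x (Suc r)) + (s (Suc r) - s r) * x (Suc r)"
    using ic[of r] Suc.prems by (simp add: algebra_simps)
  ultimately have "?F * (p r - s r * x r) \<ge> ?F * ((p (Suc r) - s (Suc r) * x (Suc r)) + (s (Suc r) - s r) * x (Suc r))"
    by (rule mult_left_mono[rotated])
  then show ?case using Suc by (simp add: algebra_simps)
qed

text \<open>A discrete form of Myerson's lemma: \<open>D\<close> is the distribution of a seller's cost level
  \<open>k \<le> m\<close>, with cost \<open>s k\<close>, allocation \<open>x k\<close> and payment \<open>p k\<close>. The hypothesis \<open>virtual_cost\<close> says
  that the virtual cost of every level \<open>k \<ge> 1\<close> equals 1, so the expected payment is at least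
  the expected allocation except at level 0.\<close>
lemma myerson_payment_ge:
  fixes D s x p :: "nat \<Rightarrow> real"
  assumes D: "\<And>k. D k \<ge> 0"
    and ic: "\<And>k. k < m \<Longrightarrow> p k - s k * x k \<ge> p (Suc k) - s k * x (Suc k)"
    and ir: "p m - s m * x m \<ge> 0"
    and virtual_cost: "\<And>k. k < m \<Longrightarrow> D (Suc k) = s (Suc k) * D (Suc k) + (s (Suc k) - s k) * (\<Sum>j\<le>k. D j)"
    and s0: "s 0 = 0" and x0: "x 0 \<le> 1"
  shows "(\<Sum>k\<le>m. D k * p k) \<ge> (\<Sum>k\<le>m. D k * x k) - D 0"
proof -
  have "(\<Sum>j\<le>m. D j) * (p m - s m * x m) \<ge> 0" using D ir by (simp add: sum_nonneg)
  then have profit: "(\<Sum>k\<le>m. D k * (p k - s k * x k)) \<ge> (\<Sum>k<m. (\<Sum>j\<le>k. D j) * (s (Suc k) - s k) * x (Suc k))"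
    using myerson_summation[of D m p s x m, OF D ic] by linarith
  have "(\<Sum>k\<le>m. D k * p k) = (\<Sum>k\<le>m. D k * (p k - s k * x k)) + (\<Sum>k\<le>m. D k * s k * x k)"
    by (simp add: algebra_simps sum.distrib[symmetric])
  also have "(\<Sum>k\<le>m. D k * s k * x k) = (\<Sum>k<m. D (Suc k) * s (Suc k) * x (Suc k))"
    using s0 by (simp add: sum.atMost_shift)
  finally have pay: "(\<Sum>k\<le>m. D k * p k) = (\<Sum>k\<le>m. D k * (p k - s k * x k)) + (\<Sum>k<m. D (Suc k) * s (Suc k) * x (Suc k))" .
  have "(\<Sum>k<m. D (Suc k) * x (Suc k)) = (\<Sum>k<m. (\<Sum>j\<le>k. D j) * (s (Suc k) - s k) * x (Suc k)
      + D (Suc k) * s (Suc k) * x (Suc k))"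
  proof (rule sum.cong[OF refl])
    fix k assume "k \<in> {..<m}"
    then have "D (Suc k) * x (Suc k) = (s (Suc k) * D (Suc k) + (s (Suc k) - s k) * (\<Sum>j\<le>k. D j)) * x (Suc k)"
      using virtual_cost by simp
    then show "D (Suc k) * x (Suc k) = (\<Sum>j\<le>k. D j) * (s (Suc k) - s k) * x (Suc k) + D (Suc k) * s (Suc k) * x (Suc k)"
      by (simp add: algebra_simps)
  qed
  moreover have "(\<Sum>k\<le>m. D k * x k) = D 0 * x 0 + (\<Sum>k<m. D (Suc k) * x (Suc k))"
    by (simp add: sum.atMost_shift)
  moreover have "D 0 * x 0 \<le> D 0" using D[of 0] x0 by (simp add: mult_left_le)
  ultimately show ?thesis using profit pay by (simp add: sum.distrib)
qed

text \<open>\<open>iid_exp D m n h\<close> is the expectation of \<open>h \<kappa>\<close> when \<open>\<kappa> 0, \<dots>, \<kappa> (n - 1)\<close> are independent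
  with law \<open>D\<close> on \<open>{..m}\<close> and \<open>\<kappa> j = 0\<close> for \<open>j \<ge> n\<close>.\<close>
primrec iid_exp :: "(nat \<Rightarrow> real) \<Rightarrow> nat \<Rightarrow> nat \<Rightarrow> ((nat \<Rightarrow> nat) \<Rightarrow> real) \<Rightarrow> real" where
  "iid_exp D m 0 h = h (\<lambda>_. 0)"
| "iid_exp D m (Suc n) h = (\<Sum>k\<le>m. D k * iid_exp D m n (\<lambda>\<kappa>. h (\<kappa>(n:=k))))"

lemma iid_exp_add: "iid_exp D m n (\<lambda>\<kappa>. f \<kappa> + g \<kappa>) = iid_exp D m n f + iid_exp D m n g"
  by (induction n arbitrary: f g) (simp_all add: sum.distrib distrib_left)

lemma iid_exp_cmult: "iid_exp D m n (\<lambda>\<kappa>. a * f \<kappa>) = a * iid_exp D m n f"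
  by (induction n arbitrary: f) (simp_all add: sum_distrib_left mult.left_commute)

lemma iid_exp_diff: "iid_exp D m n (\<lambda>\<kappa>. f \<kappa> - g \<kappa>) = iid_exp D m n f - iid_exp D m n g"
  using iid_exp_add[of D m n f "\<lambda>\<kappa>. - g \<kappa>"] iid_exp_cmult[of D m n "-1" g] by simp

lemma iid_exp_zero: "iid_exp D m n (\<lambda>\<kappa>. 0) = 0"
  by (induction n) simp_all

lemma iid_exp_const: "(\<Sum>k\<le>m. D k) = 1 \<Longrightarrow> iid_exp D m n (\<lambda>\<kappa>. a) = a"
  by (induction n) (simp_all add: sum_distrib_right[symmetric])

lemma iid_exp_mono:
  "(\<And>k. D k \<ge> 0) \<Longrightarrow> (\<And>\<kappa>. f \<kappa> \<le> g \<kappa>) \<Longrightarrow> iid_exp D m n f \<le> iid_exp D m n g"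
  by (induction n arbitrary: f g) (simp_all add: sum_mono mult_left_mono)

lemma iid_exp_sum:
  "finite A \<Longrightarrow> iid_exp D m n (\<lambda>\<kappa>. \<Sum>i\<in>A. f i \<kappa>) = (\<Sum>i\<in>A. iid_exp D m n (f i))"
  by (induction A rule: finite_induct) (simp_all add: iid_exp_zero iid_exp_add)

lemma iid_exp_resample:
  assumes "(\<Sum>k\<le>m. D k) = 1" and "i < n"
  shows "iid_exp D m n h = iid_exp D m n (\<lambda>\<kappa>. \<Sum>k\<le>m. D k * h (\<kappa>(i:=k)))"
  using \<open>i < n\<close>
proof (induction n arbitrary: h)
  case 0 then show ?case by simp
next
  case (Suc n)
  show ?case
  proof (cases "i = n")
    case True
    have "iid_exp D m (Suc n) (\<lambda>\<kappa>. \<Sum>k\<le>m. D k * h (\<kappa>(i:=k)))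
        = (\<Sum>l\<le>m. D l * iid_exp D m n (\<lambda>\<kappa>. \<Sum>k\<le>m. D k * h (\<kappa>(n:=k))))"
      using True by simp
    also have "\<dots> = iid_exp D m n (\<lambda>\<kappa>. \<Sum>k\<le>m. D k * h (\<kappa>(n:=k)))"
      using assms(1) by (simp add: sum_distrib_right[symmetric])
    also have "\<dots> = iid_exp D m (Suc n) h"
      by (simp add: iid_exp_sum iid_exp_cmult)
    finally show ?thesis by (rule sym)
  next
    case False
    then have "i < n" using Suc.prems by simp
    then have "iid_exp D m (Suc n) h
        = (\<Sum>l\<le>m. D l * iid_exp D m n (\<lambda>\<kappa>. \<Sum>k\<le>m. D k * h (\<kappa>(i:=k, n:=l))))"
      by (simp only: iid_exp.simps Suc.IH[of "\<lambda>\<kappa>. h (\<kappa>(n:=_))"])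
    also have "\<dots> = iid_exp D m (Suc n) (\<lambda>\<kappa>. \<Sum>k\<le>m. D k * h (\<kappa>(i:=k)))"
      using False by (simp add: fun_upd_twist)
    finally show ?thesis .
  qed
qed

lemma sum_lessThan_fun_upd:
  "(\<Sum>i<Suc n. s ((\<kappa>(n:=k)) i)) = (\<Sum>i<n. s (\<kappa> i)) + (s k :: real)"
proof -
  have "(\<Sum>i<n. s ((\<kappa>(n:=k)) i)) = (\<Sum>i<n. s (\<kappa> i))" by (rule sum.cong) auto
  then show ?thesis by simp
qed

lemma iid_exp_centered_sum:
  assumes D1: "(\<Sum>k\<le>m. D k) = 1" and b: "b = (\<Sum>k\<le>m. D k * s k)"
  shows "iid_exp D m n (\<lambda>\<kappa>. (\<Sum>i<n. s (\<kappa> i)) - real n * b) = 0 \<and>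
    iid_exp D m n (\<lambda>\<kappa>. ((\<Sum>i<n. s (\<kappa> i)) - real n * b)^2) = real n * (\<Sum>k\<le>m. D k * (s k - b)^2)"
proof (induction n)
  case 0 then show ?case by simp
next
  case (Suc n)
  let ?Y = "\<lambda>\<kappa>. (\<Sum>i<n. s (\<kappa> i)) - real n * b"
  let ?V = "\<Sum>k\<le>m. D k * (s k - b)^2"
  have upd: "(\<Sum>i<Suc n. s ((\<kappa>(n:=k)) i)) - real (Suc n) * b = ?Y \<kappa> + (s k - b)" for \<kappa> k
    by (simp add: sum_lessThan_fun_upd algebra_simps)
  have mean: "iid_exp D m n (\<lambda>\<kappa>. ?Y \<kappa> + (s k - b)) = s k - b" for k
    using Suc.IH D1 by (simp add: iid_exp_add iid_exp_const)
  have square: "iid_exp D m n (\<lambda>\<kappa>. (?Y \<kappa> + (s k - b))^2) = real n * ?V + (s k - b)^2" for k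
  proof -
    have "iid_exp D m n (\<lambda>\<kappa>. (?Y \<kappa> + (s k - b))^2) =
       iid_exp D m n (\<lambda>\<kappa>. (?Y \<kappa>)^2 + ((2 * (s k - b)) * ?Y \<kappa> + (s k - b)^2))"
      by (simp add: power2_eq_square algebra_simps)
    also have "\<dots> = real n * ?V + (s k - b)^2"
      using Suc.IH D1 by (simp add: iid_exp_add iid_exp_cmult iid_exp_const)
    finally show ?thesis .
  qed
  have "iid_exp D m (Suc n) (\<lambda>\<kappa>. (\<Sum>i<Suc n. s (\<kappa> i)) - real (Suc n) * b) = (\<Sum>k\<le>m. D k * (s k - b))"
    by (simp only: iid_exp.simps upd mean)
  also have "\<dots> = 0"
    using D1 b by (simp add: algebra_simps sum_subtractf sum_distrib_right[symmetric])
  moreover have "iid_exp D m (Suc n) (\<lambda>\<kappa>. ((\<Sum>i<Suc n. s (\<kappa> i)) - real (Suc n) * b)^2)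
      = (\<Sum>k\<le>m. D k * (real n * ?V + (s k - b)^2))"
    by (simp only: iid_exp.simps upd square)
  moreover have "\<dots> = real (Suc n) * ?V" using D1
    by (simp add: distrib_left sum.distrib sum_distrib_right[symmetric] mult.commute algebra_simps)
  ultimately show ?case by simp
qed

lemma iid_exp_excess_le_sqrt:
  assumes D0: "\<And>k. D k \<ge> 0" and D1: "(\<Sum>k\<le>m. D k) = 1"
    and s: "\<And>k. 0 \<le> s k \<and> s k \<le> 1" and b: "b = (\<Sum>k\<le>m. D k * s k)"
  shows "iid_exp D m n (\<lambda>\<kappa>. max 0 ((\<Sum>i<n. s (\<kappa> i)) - real n * b)) \<le> sqrt n"
proof (cases "n = 0")
  case True then show ?thesis by simp
next
  case False
  define Z where "Z \<kappa> = (\<Sum>i<n. s (\<kappa> i)) - real n * b" for \<kappa>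
  define V where "V = (\<Sum>k\<le>m. D k * (s k - b)^2)"
  define \<epsilon> where "\<epsilon> = sqrt n / 2"
  have \<epsilon>: "\<epsilon> > 0" using False by (simp add: \<epsilon>_def)
  have "0 \<le> b" "b \<le> (\<Sum>k\<le>m. D k)"
    unfolding b using D0 s by (auto intro!: sum_nonneg sum_mono mult_left_le)
  then have "(s k - b)^2 \<le> 1" for k using s[of k] D1 by (simp add: abs_square_le_1 abs_le_iff)
  then have "V \<le> (\<Sum>k\<le>m. D k)" unfolding V_def by (intro sum_mono mult_left_le D0)
  then have V: "V \<le> 1" using D1 by simp
  have excess: "max 0 (Z \<kappa>) \<le> (1 / (4 * \<epsilon>)) * (Z \<kappa>)^2 + \<epsilon>" for \<kappa>
  proof -
    have "4 * \<epsilon> * Z \<kappa> \<le> (Z \<kappa>)^2 + 4 * \<epsilon> * \<epsilon>"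
      using zero_le_power2[of "Z \<kappa> - 2 * \<epsilon>"] by (simp add: power2_eq_square algebra_simps)
    then show ?thesis using \<epsilon> by (simp add: field_simps)
  qed
  have "iid_exp D m n (\<lambda>\<kappa>. max 0 (Z \<kappa>)) \<le> iid_exp D m n (\<lambda>\<kappa>. (1 / (4 * \<epsilon>)) * (Z \<kappa>)^2 + \<epsilon>)"
    using excess by (intro iid_exp_mono[OF D0])
  also have "\<dots> = (1 / (4 * \<epsilon>)) * iid_exp D m n (\<lambda>\<kappa>. (Z \<kappa>)^2) + \<epsilon>"
    by (simp only: iid_exp_add iid_exp_cmult iid_exp_const[OF D1])
  also have "\<dots> = real n * V / (4 * \<epsilon>) + \<epsilon>"
    using iid_exp_centered_sum[OF D1 b, of n] by (simp add: Z_def V_def)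
  also have "\<dots> \<le> real n / (4 * \<epsilon>) + \<epsilon>"
    using V \<epsilon> by (simp add: divide_right_mono mult_left_le)
  also have "\<dots> = sqrt n"
    using False by (simp add: \<epsilon>_def field_simps real_div_sqrt)
  finally show ?thesis by (simp add: Z_def)
qed

text \<open>A discretisation, with \<open>m\<close> levels, of the cost distribution \<open>F(c) = e\<^sup>-\<^sup>1 / (1 - c)\<close> on
  \<open>[0, 1 - 1/e]\<close>, whose virtual cost \<open>c + F(c) / F'(c)\<close> is identically 1: level \<open>k\<close> has cost
  \<open>1 - exp (- k / m)\<close> and cumulative probability \<open>exp (k / m - 1)\<close>.\<close>
definition hard_dist :: "nat \<Rightarrow> nat \<Rightarrow> real" where
  "hard_dist m k = (if k = 0 then exp (-1)
     else if k \<le> m then exp (real (k - 1) / real m - 1) * (exp (1 / real m) - 1) else 0)"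

definition hard_cost :: "nat \<Rightarrow> nat \<Rightarrow> real" where
  "hard_cost m k = 1 - exp (- (real k / real m))"

definition hard_mean :: "nat \<Rightarrow> real" where
  "hard_mean m = (\<Sum>k\<le>m. hard_dist m k * hard_cost m k)"

lemma hard_dist_nonneg: "hard_dist m k \<ge> 0"
  unfolding hard_dist_def by (auto intro!: mult_nonneg_nonneg simp: one_le_exp_iff)

lemma hard_dist_cumulative:
  assumes "m > 0" "k \<le> m"
  shows "(\<Sum>j\<le>k. hard_dist m j) = exp (real k / real m - 1)"
  using \<open>k \<le> m\<close>
proof (induction k)
  case 0 then show ?case by (simp add: hard_dist_def)
next
  case (Suc k)
  have "(\<Sum>j\<le>Suc k. hard_dist m j)
      = exp (real k / real m - 1) + exp (real k / real m - 1) * (exp (1 / real m) - 1)"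
    using Suc by (simp add: hard_dist_def)
  also have "\<dots> = exp (real k / real m - 1) * exp (1 / real m)" by (simp add: algebra_simps)
  also have "\<dots> = exp (real (Suc k) / real m - 1)"
    unfolding exp_add[symmetric] using assms by (simp add: field_simps)
  finally show ?case .
qed

lemma hard_dist_sum: "m > 0 \<Longrightarrow> (\<Sum>k\<le>m. hard_dist m k) = 1"
  using hard_dist_cumulative[of m m] by simp

lemma hard_cost_0 [simp]: "hard_cost m 0 = 0"
  by (simp add: hard_cost_def)

lemma hard_cost_bounds: "0 \<le> hard_cost m k" "hard_cost m k < 1"
  unfolding hard_cost_def by auto

lemma hard_cost_ge_hard_cost_1: "1 \<le> k \<Longrightarrow> hard_cost m 1 \<le> hard_cost m k"
  unfolding hard_cost_def by (simp add: divide_right_mono)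

lemma hard_cost_1_pos: "m > 0 \<Longrightarrow> hard_cost m 1 > 0"
  unfolding hard_cost_def by simp

lemma hard_dist_mult_one_minus_cost:
  assumes "m > 0" "1 \<le> k" "k \<le> m"
  shows "hard_dist m k * (1 - hard_cost m k) = exp (-1) * (1 - exp (- 1 / real m))"
proof -
  obtain j where k: "k = Suc j" using assms(2) by (cases k) auto
  let ?a = "real j / real m - 1" and ?b = "1 / real m" and ?c = "- (real k / real m)"
  have "hard_dist m k * (1 - hard_cost m k) = exp ?a * exp ?b * exp ?c - exp ?a * exp ?c"
    using assms k by (simp add: hard_dist_def hard_cost_def algebra_simps)
  also have "\<dots> = exp (?a + ?b + ?c) - exp (?a + ?c)" by (simp only: exp_add)
  also have "?a + ?b + ?c = -1" using assms(1) by (simp add: k field_simps)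
  also have "?a + ?c = -1 + (- 1 / real m)" using assms(1) by (simp add: k field_simps)
  finally show ?thesis by (simp only: exp_add) (simp add: algebra_simps)
qed

lemma hard_dist_virtual_cost:
  assumes "m > 0" "k < m"
  shows "hard_dist m (Suc k) = hard_cost m (Suc k) * hard_dist m (Suc k)
    + (hard_cost m (Suc k) - hard_cost m k) * (\<Sum>j\<le>k. hard_dist m j)"
proof -
  let ?a = "- (real k / real m)" and ?b = "- (real (Suc k) / real m)" and ?c = "real k / real m - 1"
  have "(hard_cost m (Suc k) - hard_cost m k) * (\<Sum>j\<le>k. hard_dist m j) = (exp ?a - exp ?b) * exp ?c"
    using hard_dist_cumulative[of m k] assms by (simp add: hard_cost_def)
  also have "\<dots> = exp (?a + ?c) - exp (?b + ?c)"
    by (simp only: exp_add) (simp add: algebra_simps)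
  also have "?a + ?c = -1" by simp
  also have "?b + ?c = -1 + (- 1 / real m)" using assms(1) by (simp add: field_simps)
  finally have "(hard_cost m (Suc k) - hard_cost m k) * (\<Sum>j\<le>k. hard_dist m j)
      = hard_dist m (Suc k) * (1 - hard_cost m (Suc k))"
    using hard_dist_mult_one_minus_cost[of m "Suc k"] assms by (simp only: exp_add) (simp add: algebra_simps)
  then show ?thesis by (simp add: algebra_simps)
qed

lemma hard_mean_pos: "m > 0 \<Longrightarrow> hard_mean m > 0"
proof -
  assume "m > 0"
  then have "0 < hard_dist m m * hard_cost m m"
    by (auto simp: hard_dist_def hard_cost_def intro!: mult_pos_pos)
  also have "\<dots> \<le> hard_mean m" unfolding hard_mean_def
    by (intro member_le_sum) (auto intro!: mult_nonneg_nonneg hard_dist_nonneg hard_cost_bounds)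
  finally show ?thesis .
qed

lemma exp_neg_inverse_le: "m > 0 \<Longrightarrow> exp (- 1 / real m) \<le> real m / (real m + 1)"
proof -
  assume m: "m > 0"
  have "exp (- 1 / real m) = 1 / exp (1 / real m)" by (simp add: exp_minus field_simps)
  also have "\<dots> \<le> 1 / (1 + 1 / real m)"
    using exp_ge_add_one_self[of "1 / real m"] m by (intro divide_left_mono) (auto intro!: mult_pos_pos add_pos_pos)
  also have "\<dots> = real m / (real m + 1)" using m by (simp add: field_simps)
  finally show ?thesis .
qed

lemma hard_dist_0_plus_mean_le:
  assumes "m > 0"
  shows "hard_dist m 0 + hard_mean m \<le> 1 - exp (-1) + 1 / (real m + 1)"
proof -
  have "hard_mean m = (\<Sum>k\<le>m. hard_dist m k) - (\<Sum>k\<le>m. hard_dist m k * (1 - hard_cost m k))"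
    unfolding hard_mean_def by (simp add: sum_subtractf[symmetric] algebra_simps)
  also have "(\<Sum>k\<le>m. hard_dist m k * (1 - hard_cost m k))
      = hard_dist m 0 + (\<Sum>k<m. hard_dist m (Suc k) * (1 - hard_cost m (Suc k)))"
    by (simp add: sum.atMost_shift)
  also have "(\<Sum>k<m. hard_dist m (Suc k) * (1 - hard_cost m (Suc k)))
      = exp (-1) * (real m * (1 - exp (- 1 / real m)))"
    using hard_dist_mult_one_minus_cost[OF assms] by simp
  finally have "hard_dist m 0 + hard_mean m = 1 - exp (-1) * (real m * (1 - exp (- 1 / real m)))"
    using hard_dist_sum[OF assms] by simp
  moreover have "real m * (1 - exp (- 1 / real m)) \<ge> 1 - 1 / (real m + 1)"
  proof -
    have "real m * (1 - exp (- 1 / real m)) \<ge> real m * (1 - real m / (real m + 1))"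
      using exp_neg_inverse_le[OF assms] by (intro mult_left_mono) auto
    then show ?thesis by (simp add: field_simps)
  qed
  then have "exp (-1) * (1 - 1 / (real m + 1)) \<le> exp (-1) * (real m * (1 - exp (- 1 / real m)))"
    by (intro mult_left_mono) auto
  moreover have "exp (-1) / (real m + 1) \<le> 1 / (real m + 1)"
    by (intro divide_right_mono) auto
  ultimately show ?thesis by (simp add: algebra_simps)
qed

lemma opt_frac_unit_ge:
  fixes S :: "nat set" and c :: "nat \<Rightarrow> real"
  assumes fin: "finite S" and B: "B > 0" and \<sigma>: "\<sigma> > 0"
    and cs: "\<And>i. i \<in> S \<Longrightarrow> c i = 0 \<or> c i \<ge> \<sigma>"
  shows "opt_frac S (\<lambda>_. 1) B c \<ge> real (card S) - max 0 ((\<Sum>i\<in>S. c i) - B) / \<sigma>"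
proof -
  define C where "C = (\<Sum>i\<in>S. c i)"
  have C: "C \<ge> 0" unfolding C_def using cs \<sigma> by (intro sum_nonneg) force
  \<comment> \<open>buy the free items entirely and scale all other items down by a common factor \<open>t\<close>\<close>
  define t where "t = (if C \<le> B then 1 else B / C)"
  have t: "0 \<le> t" "t \<le> 1" "t * C \<le> B" "(1 - t) * C = max 0 (C - B)"
    using C B by (auto simp: t_def field_simps)
  define a where "a i = (if c i = 0 then 1 else t)" for i
  let ?A = "{\<Sum>i\<in>S. 1 * a i | a. (\<forall>i\<in>S. 0 \<le> a i \<and> a i \<le> 1) \<and> (\<Sum>i\<in>S. c i * a i) \<le> B}"
  have "(\<Sum>i\<in>S. c i * a i) = (\<Sum>i\<in>S. t * c i)" by (rule sum.cong) (auto simp: a_def)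
  also have "\<dots> = t * C" by (simp add: C_def sum_distrib_left)
  finally have "(\<Sum>i\<in>S. 1 * a i) \<in> ?A" using t by (auto simp: a_def)
  moreover have "bdd_above ?A"
  proof (rule bdd_aboveI)
    fix y assume "y \<in> ?A"
    then obtain a' where "y = (\<Sum>i\<in>S. 1 * a' i)" and "\<forall>i\<in>S. 0 \<le> a' i \<and> a' i \<le> 1" by blast
    then show "y \<le> real (card S)" using sum_mono[of S a' "\<lambda>_. 1"] by simp
  qed
  ultimately have opt: "(\<Sum>i\<in>S. 1 * a i) \<le> opt_frac S (\<lambda>_. 1) B c"
    unfolding opt_frac_def by (rule cSup_upper)
  have "a i \<ge> 1 - (1 - t) * (c i / \<sigma>)" if "i \<in> S" for i
  proof (cases "c i = 0")
    case True then show ?thesis by (simp add: a_def)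
  next
    case False
    then have "c i / \<sigma> \<ge> 1" using cs[OF that] \<sigma> by simp
    then have "(1 - t) * (c i / \<sigma>) \<ge> (1 - t) * 1" using t by (intro mult_left_mono) auto
    then show ?thesis using False by (simp add: a_def)
  qed
  then have "(\<Sum>i\<in>S. 1 * a i) \<ge> (\<Sum>i\<in>S. 1 - (1 - t) * (c i / \<sigma>))" by (simp add: sum_mono)
  also have "(\<Sum>i\<in>S. 1 - (1 - t) * (c i / \<sigma>)) = real (card S) - (1 - t) * C / \<sigma>"
    by (simp add: sum_subtractf C_def sum_distrib_left sum_divide_distrib)
  finally show ?thesis using opt t by (simp add: C_def)
qed

lemma valid_instance_unit: "n > 0 \<Longrightarrow> B > 0 \<Longrightarrow> valid_instance {..<n} (\<lambda>_. 1) B"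
  by (auto simp: valid_instance_def)

lemma valid_costs_hard_cost: "valid_costs S (hard_cost m \<circ> \<kappa>)"
  by (simp add: valid_costs_def hard_cost_bounds)

lemma hard_instance_exp_x_le:
  fixes M :: mechanism
  assumes M: "well_formed M" "indiv_rational_exp M" "truthful_exp M" "budget_feasible_exp M"
    and "m > 0" "B > 0" "i < n"
  defines "X \<equiv> \<lambda>\<kappa>. exp_x (M {..<n} (\<lambda>_. 1) B (hard_cost m \<circ> \<kappa>)) i"
    and "P \<equiv> \<lambda>\<kappa>. exp_p (M {..<n} (\<lambda>_. 1) B (hard_cost m \<circ> \<kappa>)) i"
  shows "iid_exp (hard_dist m) m n X \<le> iid_exp (hard_dist m) m n P + hard_dist m 0"
proof -
  let ?D = "hard_dist m" and ?s = "hard_cost m" and ?S = "{..<n}"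
  have i: "i \<in> ?S" using \<open>i < n\<close> by simp
  have valid: "valid_instance ?S (\<lambda>_. 1) B" "valid_costs ?S (?s \<circ> \<kappa>)" for \<kappa>
    using valid_instance_unit valid_costs_hard_cost \<open>B > 0\<close> \<open>i < n\<close> by auto
  have D1: "(\<Sum>k\<le>m. ?D k) = 1" using hard_dist_sum \<open>m > 0\<close> by blast
  have myerson: "(\<Sum>k\<le>m. ?D k * P (\<kappa>(i:=k))) \<ge> (\<Sum>k\<le>m. ?D k * X (\<kappa>(i:=k))) - ?D 0" for \<kappa>
  proof (rule myerson_payment_ge[OF hard_dist_nonneg])
    fix k assume "k < m"
    have "(?s \<circ> \<kappa>(i:=k))(i := ?s (Suc k)) = ?s \<circ> \<kappa>(i:=Suc k)" by auto
    then show "P (\<kappa>(i:=k)) - ?s k * X (\<kappa>(i:=k)) \<ge> P (\<kappa>(i:=Suc k)) - ?s k * X (\<kappa>(i:=Suc k))"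
      using truthful_exp_profit_ge[OF M(1,4,3) valid(1) valid(2)[of "\<kappa>(i:=k)"] i, of "?s (Suc k)"]
      by (simp add: P_def X_def hard_cost_bounds)
  next
    show "P (\<kappa>(i:=m)) - ?s m * X (\<kappa>(i:=m)) \<ge> 0"
      using M(2) valid(1) valid(2)[of "\<kappa>(i:=m)"] i unfolding indiv_rational_exp_def
      by (force simp: P_def X_def)
  next
    show "?D (Suc k) = ?s (Suc k) * ?D (Suc k) + (?s (Suc k) - ?s k) * (\<Sum>j\<le>k. ?D j)" if "k < m" for k
      using hard_dist_virtual_cost \<open>m > 0\<close> that by blast
  next
    show "X (\<kappa>(i:=0)) \<le> 1" using exp_x_le_1[OF M(1) valid i] by (simp add: X_def)
  qed simp
  have "iid_exp ?D m n X = iid_exp ?D m n (\<lambda>\<kappa>. \<Sum>k\<le>m. ?D k * X (\<kappa>(i:=k)))"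
    by (rule iid_exp_resample[OF D1 \<open>i < n\<close>])
  also have "\<dots> \<le> iid_exp ?D m n (\<lambda>\<kappa>. (\<Sum>k\<le>m. ?D k * P (\<kappa>(i:=k))) + ?D 0)"
    using myerson by (intro iid_exp_mono[OF hard_dist_nonneg]) (simp add: algebra_simps)
  also have "\<dots> = iid_exp ?D m n P + ?D 0"
    using D1 iid_exp_resample[OF D1 \<open>i < n\<close>, of P] by (simp add: iid_exp_add iid_exp_const)
  finally show ?thesis .
qed

lemma hard_instance_utility_le:
  fixes M :: mechanism
  assumes M: "well_formed M" "indiv_rational_exp M" "truthful_exp M" "budget_feasible_exp M"
    and "m > 0" "n > 0" "B > 0"
  shows "iid_exp (hard_dist m) m n (\<lambda>\<kappa>. exp_utility M {..<n} (\<lambda>_. 1) B (hard_cost m \<circ> \<kappa>))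
    \<le> B + real n * hard_dist m 0"
proof -
  let ?D = "hard_dist m" and ?M = "\<lambda>\<kappa>. M {..<n} (\<lambda>_. 1) B (hard_cost m \<circ> \<kappa>)"
  have valid: "valid_instance {..<n} (\<lambda>_. 1) B" "valid_costs {..<n} (hard_cost m \<circ> \<kappa>)" for \<kappa>
    using valid_instance_unit valid_costs_hard_cost assms(6,7) by auto
  have D1: "(\<Sum>k\<le>m. ?D k) = 1" using hard_dist_sum \<open>m > 0\<close> by blast
  have "iid_exp ?D m n (\<lambda>\<kappa>. exp_utility M {..<n} (\<lambda>_. 1) B (hard_cost m \<circ> \<kappa>))
      = (\<Sum>i<n. iid_exp ?D m n (\<lambda>\<kappa>. exp_x (?M \<kappa>) i))"
    by (simp add: exp_utility_eq_sum[OF M(1) valid] iid_exp_sum)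
  also have "\<dots> \<le> (\<Sum>i<n. iid_exp ?D m n (\<lambda>\<kappa>. exp_p (?M \<kappa>) i) + ?D 0)"
    using hard_instance_exp_x_le[OF M \<open>m > 0\<close> \<open>B > 0\<close>] by (intro sum_mono) simp
  also have "\<dots> = iid_exp ?D m n (\<lambda>\<kappa>. \<Sum>i<n. exp_p (?M \<kappa>) i) + real n * ?D 0"
    by (simp add: iid_exp_sum sum.distrib)
  also have "iid_exp ?D m n (\<lambda>\<kappa>. \<Sum>i<n. exp_p (?M \<kappa>) i) \<le> iid_exp ?D m n (\<lambda>\<kappa>. B)"
    using sum_exp_p_le_budget[OF M(1,4) valid] by (intro iid_exp_mono[OF hard_dist_nonneg]) simp
  finally show ?thesis using iid_exp_const[OF D1] by simp
qed

lemma hard_instance_utility_ge: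
  fixes M :: mechanism
  assumes "m > 0" "n > 0" "\<alpha> \<ge> 0"
    and guarantee: "\<And>\<kappa>. exp_utility M {..<n} (\<lambda>_. 1) (real n * hard_mean m) (hard_cost m \<circ> \<kappa>)
      \<ge> \<alpha> * opt_frac {..<n} (\<lambda>_. 1) (real n * hard_mean m) (hard_cost m \<circ> \<kappa>)"
  shows "iid_exp (hard_dist m) m n (\<lambda>\<kappa>. exp_utility M {..<n} (\<lambda>_. 1) (real n * hard_mean m) (hard_cost m \<circ> \<kappa>))
    \<ge> \<alpha> * (real n - sqrt n / hard_cost m 1)"
proof -
  let ?D = "hard_dist m" and ?s = "hard_cost m" and ?B = "real n * hard_mean m"
  define Z where "Z \<kappa> = (\<Sum>i<n. ?s (\<kappa> i)) - ?B" for \<kappa>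
  have \<sigma>: "?s 1 > 0" using hard_cost_1_pos \<open>m > 0\<close> by blast
  have B: "?B > 0" using hard_mean_pos \<open>m > 0\<close> \<open>n > 0\<close> by simp
  have D1: "(\<Sum>k\<le>m. ?D k) = 1" using hard_dist_sum \<open>m > 0\<close> by blast
  have pointwise: "exp_utility M {..<n} (\<lambda>_. 1) ?B (?s \<circ> \<kappa>) \<ge> \<alpha> * real n - (\<alpha> / ?s 1) * max 0 (Z \<kappa>)" for \<kappa>
  proof -
    have "?s k = 0 \<or> ?s k \<ge> ?s 1" for k
      using hard_cost_ge_hard_cost_1[of k m] by (cases k) auto
    then have "opt_frac {..<n} (\<lambda>_. 1) ?B (?s \<circ> \<kappa>) \<ge> real n - max 0 (Z \<kappa>) / ?s 1"
      using opt_frac_unit_ge[of "{..<n}" ?B "?s 1" "?s \<circ> \<kappa>"] B \<sigma> by (simp add: Z_def)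
    then have "\<alpha> * (real n - max 0 (Z \<kappa>) / ?s 1) \<le> \<alpha> * opt_frac {..<n} (\<lambda>_. 1) ?B (?s \<circ> \<kappa>)"
      using \<open>\<alpha> \<ge> 0\<close> by (rule mult_left_mono)
    moreover have "\<alpha> * (real n - max 0 (Z \<kappa>) / ?s 1) = \<alpha> * real n - (\<alpha> / ?s 1) * max 0 (Z \<kappa>)"
      by (simp add: right_diff_distrib)
    ultimately show ?thesis using guarantee[of \<kappa>] by linarith
  qed
  have "iid_exp ?D m n (\<lambda>\<kappa>. max 0 (Z \<kappa>)) \<le> sqrt n"
    unfolding Z_def using iid_exp_excess_le_sqrt[OF hard_dist_nonneg D1, of ?s "hard_mean m" n]
    by (simp add: hard_cost_bounds less_imp_le hard_mean_def)
  then have "\<alpha> * real n - (\<alpha> / ?s 1) * sqrt n \<le> \<alpha> * real n - (\<alpha> / ?s 1) * iid_exp ?D m n (\<lambda>\<kappa>. max 0 (Z \<kappa>))"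
    using \<sigma> \<open>\<alpha> \<ge> 0\<close> by (intro diff_left_mono mult_left_mono) auto
  also have "\<dots> = iid_exp ?D m n (\<lambda>\<kappa>. \<alpha> * real n - (\<alpha> / ?s 1) * max 0 (Z \<kappa>))"
    by (simp only: iid_exp_diff iid_exp_cmult iid_exp_const[OF D1])
  also have "\<dots> \<le> iid_exp ?D m n (\<lambda>\<kappa>. exp_utility M {..<n} (\<lambda>_. 1) ?B (?s \<circ> \<kappa>))"
    using pointwise by (intro iid_exp_mono[OF hard_dist_nonneg])
  finally show ?thesis by (simp add: right_diff_distrib)
qed

lemma hard_instance_ratio_le:
  fixes M :: mechanism
  assumes M: "well_formed M" "indiv_rational_exp M" "truthful_exp M" "budget_feasible_exp M"
    and "m > 0" "n > 0" "\<alpha> \<ge> 0"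
    and guarantee: "\<And>\<kappa>. exp_utility M {..<n} (\<lambda>_. 1) (real n * hard_mean m) (hard_cost m \<circ> \<kappa>)
      \<ge> \<alpha> * opt_frac {..<n} (\<lambda>_. 1) (real n * hard_mean m) (hard_cost m \<circ> \<kappa>)"
  shows "\<alpha> - \<alpha> / (hard_cost m 1 * sqrt n) \<le> 1 - exp (-1) + 1 / (real m + 1)"
proof -
  have B: "real n * hard_mean m > 0" using hard_mean_pos \<open>m > 0\<close> \<open>n > 0\<close> by simp
  have "real n / sqrt n = sqrt n" by (simp add: real_div_sqrt)
  then have "real n * (\<alpha> / (hard_cost m 1 * sqrt n)) = \<alpha> * (sqrt n / hard_cost m 1)"
    by (metis divide_divide_eq_left mult.commute times_divide_eq_left times_divide_eq_right)
  then have "real n * (\<alpha> - \<alpha> / (hard_cost m 1 * sqrt n)) = \<alpha> * (real n - sqrt n / hard_cost m 1)"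
    by (simp add: right_diff_distrib)
  also have "\<dots> \<le> real n * (hard_dist m 0 + hard_mean m)"
    using hard_instance_utility_ge[OF \<open>m > 0\<close> \<open>n > 0\<close> \<open>\<alpha> \<ge> 0\<close> guarantee]
      hard_instance_utility_le[OF M \<open>m > 0\<close> \<open>n > 0\<close> B] by (simp add: distrib_left)
  also have "\<dots> \<le> real n * (1 - exp (-1) + 1 / (real m + 1))"
    using hard_dist_0_plus_mean_le[OF \<open>m > 0\<close>] by (intro mult_left_mono) auto
  finally show ?thesis using \<open>n > 0\<close> by simp
qed

lemma Max_hard_cost_le_1:
  fixes n :: nat
  assumes "n > 0"
  shows "Max ((hard_cost m \<circ> \<kappa>) ` {..<n}) \<le> 1"
proof (rule Max.boundedI)
  show "finite ((hard_cost m \<circ> \<kappa>) ` {..<n})" by simp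
  show "(hard_cost m \<circ> \<kappa>) ` {..<n} \<noteq> {}" using assms by auto
qed (auto simp: hard_cost_bounds less_imp_le)

lemma hard_instance_small_costs:
  assumes "m > 0" "n > 0" "\<theta> > 0" "1 / (hard_mean m * \<theta>) < real n"
  shows "Max ((hard_cost m \<circ> \<kappa>) ` {..<n}) / (real n * hard_mean m) \<le> \<theta>"
proof -
  have B: "real n * hard_mean m > 0" using hard_mean_pos assms(1,2) by simp
  have "1 < real n * (hard_mean m * \<theta>)"
    using assms(3,4) hard_mean_pos[OF assms(1)] by (simp add: pos_divide_less_eq)
  then have "1 / (real n * hard_mean m) \<le> \<theta>"
    using B by (subst pos_divide_le_eq) (auto simp: algebra_simps)
  moreover have "Max ((hard_cost m \<circ> \<kappa>) ` {..<n}) / (real n * hard_mean m) \<le> 1 / (real n * hard_mean m)"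
    using Max_hard_cost_le_1[OF \<open>n > 0\<close>] B by (intro divide_right_mono) auto
  ultimately show ?thesis by linarith
qed

theorem corollary1:
  shows "\<not> (\<exists>(M :: mechanism) (\<alpha> :: real) (\<theta>\<^sub>0 :: real).
     well_formed M \<and> indiv_rational_exp M \<and> truthful_exp M \<and> budget_feasible_exp M \<and>
     \<alpha> > 1 - 1 / exp 1 \<and> \<theta>\<^sub>0 > 0 \<and>
     (\<forall>S u B c. valid_instance S u B \<longrightarrow> valid_costs S c \<longrightarrow> Max (c ` S) / B \<le> \<theta>\<^sub>0 \<longrightarrow>
        exp_utility M S u B c \<ge> \<alpha> * opt_frac S u B c))"
proof
  assume "\<exists>(M :: mechanism) (\<alpha> :: real) (\<theta>\<^sub>0 :: real).
     well_formed M \<and> indiv_rational_exp M \<and> truthful_exp M \<and> budget_feasible_exp M \<and>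
     \<alpha> > 1 - 1 / exp 1 \<and> \<theta>\<^sub>0 > 0 \<and>
     (\<forall>S u B c. valid_instance S u B \<longrightarrow> valid_costs S c \<longrightarrow> Max (c ` S) / B \<le> \<theta>\<^sub>0 \<longrightarrow>
        exp_utility M S u B c \<ge> \<alpha> * opt_frac S u B c)"
  then obtain M :: mechanism and \<alpha> \<theta>\<^sub>0 :: real where
    M: "well_formed M" "indiv_rational_exp M" "truthful_exp M" "budget_feasible_exp M"
    and \<alpha>: "\<alpha> > 1 - exp (-1)" and \<theta>\<^sub>0: "\<theta>\<^sub>0 > 0"
    and guarantee: "\<And>S u B c. valid_instance S u B \<Longrightarrow> valid_costs S c \<Longrightarrow> Max (c ` S) / B \<le> \<theta>\<^sub>0 \<Longrightarrow>
        exp_utility M S u B c \<ge> \<alpha> * opt_frac S u B c"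
    by (auto simp: exp_minus inverse_eq_divide)
  define \<delta> where "\<delta> = \<alpha> - (1 - exp (-1))"
  define m where "m = nat \<lceil>2 / \<delta>\<rceil> + 1"
  define \<sigma> where "\<sigma> = hard_cost m 1"
  define n where "n = nat \<lceil>max ((2 * \<alpha> / (\<sigma> * \<delta>))\<^sup>2) (1 / (hard_mean m * \<theta>\<^sub>0))\<rceil> + 1"
  have "m > 0" "n > 0" "\<delta> > 0" "\<sigma> > 0"
    using \<alpha> hard_cost_1_pos[of m] by (simp_all add: m_def n_def \<delta>_def \<sigma>_def)
  have "exp (-1::real) \<le> 1" by simp
  then have "\<alpha> \<ge> 0" using \<alpha> by linarith
  have "2 / \<delta> < real m + 1" by (simp add: m_def) linarith
  then have "1 / (real m + 1) < \<delta> / 2" using \<open>\<delta> > 0\<close> by (simp add: field_simps)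
  moreover have "2 * \<alpha> / (\<sigma> * \<delta>) < sqrt n" by (rule real_less_rsqrt) (simp add: n_def, linarith)
  then have "\<alpha> / (\<sigma> * sqrt n) < \<delta> / 2" using \<open>\<sigma> > 0\<close> \<open>\<delta> > 0\<close> \<open>n > 0\<close> by (simp add: field_simps)
  moreover have "1 / (hard_mean m * \<theta>\<^sub>0) < real n" by (simp add: n_def) linarith
  then have "exp_utility M {..<n} (\<lambda>_. 1) (real n * hard_mean m) (hard_cost m \<circ> \<kappa>)
      \<ge> \<alpha> * opt_frac {..<n} (\<lambda>_. 1) (real n * hard_mean m) (hard_cost m \<circ> \<kappa>)" for \<kappa>
    using \<open>m > 0\<close> \<open>n > 0\<close> \<theta>\<^sub>0 hard_mean_pos[of m]
    by (intro guarantee valid_instance_unit valid_costs_hard_cost hard_instance_small_costs) auto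
  then have "\<alpha> - \<alpha> / (\<sigma> * sqrt n) \<le> 1 - exp (-1) + 1 / (real m + 1)"
    unfolding \<sigma>_def by (rule hard_instance_ratio_le[OF M \<open>m > 0\<close> \<open>n > 0\<close> \<open>\<alpha> \<ge> 0\<close>])
  ultimately show False by (simp add: \<delta>_def)
qed

end
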